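(* Let $(E,\langle\cdot,\cdot\rangle,\rho)$ be a Courant vector bundle over $M$. For any two pre-Courant algebroid structures $\circ$ and $\tilde\circ$ on it, the associated Lie 2-algebras are isomorphic.
   Context: A Courant vector bundle over a smooth manifold $M$ is a vector bundle $E\to M$ with a fibrewise nondegenerate symmetric bilinear form $\langle\cdot,\cdot\rangle$ and a bundle map $\rho:E\to TM$ such that $\rho\circ\rho^*=0$, where $\rho^*:T^*M\to E^*\cong E$ is the dual of $\rho$ followed by the identification $E^*\cong E$ via $\langle\cdot,\cdot\rangle$. A pre-Courant algebroid structure on it is an $\mathbb R$-bilinear operation $\circ$ on $\Gamma(E)$ such that for all $e_1,e_2,e_3\in\Gamma(E)$: (i) $\rho(e_1\circ e_2)=[\rho(e_1),\rho(e_2)]$; (ii) $\langle e_1\circ e_1,e_2\rangle=\frac12\rho(e_2)\langle e_1,e_1\rangle$; (iii) $\rho(e_1)\langle e_2,e_3\rangle=\langle e_1\circ e_2,e_3\rangle+\langle e_2,e_1\circ e_3\rangle$. The Lie 2-algebra associated to $(E,\langle\cdot,\cdot\rangle,\rho,\circ)$ is the complex $\Gamma(\operatorname{Ker}\rho)\xrightarrow{i}\Gamma(E)$ ($i$ inclusion) with $l_2(e_1,e_2)=[\![e_1,e_2]\!]:=\frac12(e_1\circ e_2-e_2\circ e_1)$, $l_2(e,\kappa)=[\![e,\kappa]\!]=-l_2(\kappa,e)$ ($e\in\Gamma(E)$, $\kappa\in\Gamma(\operatorname{Ker}\rho)$), and $l_3(e_1,e_2,e_3)=[\![e_1,[\![e_2,e_3]\!]]\!]+[\![e_2,[\![e_3,e_1]\!]]\!]+[\![e_3,[\![e_1,e_2]\!]]\!]$.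 For two such structures $(V_1\xrightarrow{d}V_0,l_2,l_3)$ and $(V_1'\xrightarrow{d'}V_0',l_2',l_3')$, an isomorphism consists of bijective linear maps $f_0:V_0\to V_0'$, $f_1:V_1\to V_1'$ with $f_0\circ d=d'\circ f_1$ and a bilinear map $f_2:V_0\times V_0\to V_1'$ such that for all $x,y,z\in V_0$, $m\in V_1$: $l_2'(f_0x,f_0y)-f_0l_2(x,y)=d'f_2(x,y)$; $l_2'(f_0x,f_1m)-f_1l_2(x,m)=f_2(x,dm)$; $l_2'(f_1m,f_0x)-f_1l_2(m,x)=f_2(dm,x)$; and $f_1(l_3(x,y,z))+l_2'(f_0x,f_2(y,z))-l_2'(f_0y,f_2(x,z))-l_2'(f_2(x,y),f_0z)-f_2(l_2(x,y),z)+f_2(x,l_2(y,z))-f_2(y,l_2(x,z))-l_3'(f_0x,f_0y,f_0z)=0$. *)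

theory Defs
  imports Main "HOL.Real_Vector_Spaces"
begin

text \<open>Algebraic model of a Courant vector bundle (E, pairing, rho) over M.
  'f plays the role of C^\<infinity>(M) (a commutative real algebra), 'e the role of
  the space of sections Gamma(E) (a real vector space and 'f-module via smul),
  vector fields are derivations of C^\<infinity>(M), i.e. maps 'f \<Rightarrow> 'f, and the
  Lie bracket of vector fields is the commutator of derivations.\<close>

definition vf_bracket :: "('f::ab_group_add \<Rightarrow> 'f) \<Rightarrow> ('f \<Rightarrow> 'f) \<Rightarrow> ('f \<Rightarrow> 'f)" where
  "vf_bracket X Y = (\<lambda>f. X (Y f) - Y (X f))"

definition is_derivation :: "('f::{comm_ring_1,real_algebra_1} \<Rightarrow> 'f) \<Rightarrow> bool" where
  "is_derivation X \<longleftrightarrow>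
     (\<forall>f g. X (f + g) = X f + X g) \<and> (\<forall>r f. X (r *\<^sub>R f) = r *\<^sub>R X f) \<and>
     (\<forall>f g. X (f * g) = f * X g + g * X f)"

definition courant_vector_bundle ::
  "('f::{comm_ring_1,real_algebra_1} \<Rightarrow> 'e::real_vector \<Rightarrow> 'e) \<Rightarrow> ('e \<Rightarrow> 'e \<Rightarrow> 'f) \<Rightarrow> ('e \<Rightarrow> 'f \<Rightarrow> 'f) \<Rightarrow> bool" where
  "courant_vector_bundle smul ip rho \<longleftrightarrow>
     \<comment> \<open>Gamma(E) is a C^\<infinity>(M)-module compatible with its real structure\<close>
     (\<forall>a b e. smul (a * b) e = smul a (smul b e)) \<and> (\<forall>e. smul 1 e = e) \<and>
     (\<forall>a b e. smul (a + b) e = smul a e + smul b e) \<and>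
     (\<forall>a e e'. smul a (e + e') = smul a e + smul a e') \<and>
     (\<forall>r e. smul (of_real r) e = r *\<^sub>R e) \<and>
     \<comment> \<open>pairing: symmetric, C^\<infinity>(M)-bilinear\<close>
     (\<forall>e e'. ip e e' = ip e' e) \<and>
     (\<forall>e e' e''. ip (e + e') e'' = ip e e'' + ip e' e'') \<and>
     (\<forall>a e e'. ip (smul a e) e' = a * ip e e') \<and>
     \<comment> \<open>nondegenerate: the induced map Gamma(E) \<rightarrow> Gamma(E^*) is bijective\<close>
     (\<forall>e. (\<forall>e'. ip e e' = 0) \<longrightarrow> e = 0) \<and>
     (\<forall>\<phi>::'e \<Rightarrow> 'f. (\<forall>e e'. \<phi> (e + e') = \<phi> e + \<phi> e') \<and> (\<forall>a e. \<phi> (smul a e) = a * \<phi> e)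
         \<longrightarrow> (\<exists>e0. \<forall>e. ip e0 e = \<phi> e)) \<and>
     \<comment> \<open>anchor: C^\<infinity>(M)-linear, valued in vector fields (derivations)\<close>
     (\<forall>e. is_derivation (rho e)) \<and>
     (\<forall>e e'. rho (e + e') = (\<lambda>f. rho e f + rho e' f)) \<and>
     (\<forall>a e. rho (smul a e) = (\<lambda>f. a * rho e f)) \<and>
     \<comment> \<open>rho \<circ> rho^* = 0: for every f, the section rho^*(df), characterised by
        pairing(rho^*(df), e) = (df)(rho e) = rho(e) f, lies in Ker rho\<close>
     (\<forall>f e0. (\<forall>e. ip e0 e = rho e f) \<longrightarrow> rho e0 = (\<lambda>g. 0))"

definition pre_courant ::
  "('f::{comm_ring_1,real_algebra_1} \<Rightarrow> 'e::real_vector \<Rightarrow> 'e) \<Rightarrow> ('e \<Rightarrow> 'e \<Rightarrow> 'f) \<Rightarrow> ('e \<Rightarrow> 'f \<Rightarrow> 'f)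
    \<Rightarrow> ('e \<Rightarrow> 'e \<Rightarrow> 'e) \<Rightarrow> bool" where
  "pre_courant smul ip rho circ \<longleftrightarrow>
     \<comment> \<open>R-bilinear\<close>
     (\<forall>a b c. circ (a + b) c = circ a c + circ b c) \<and>
     (\<forall>a b c. circ a (b + c) = circ a b + circ a c) \<and>
     (\<forall>r a b. circ (r *\<^sub>R a) b = r *\<^sub>R circ a b) \<and>
     (\<forall>r a b. circ a (r *\<^sub>R b) = r *\<^sub>R circ a b) \<and>
     \<comment> \<open>(i)\<close>
     (\<forall>e1 e2. rho (circ e1 e2) = vf_bracket (rho e1) (rho e2)) \<and>
     \<comment> \<open>(ii)\<close>
     (\<forall>e1 e2. ip (circ e1 e1) e2 = (1/2) *\<^sub>R rho e2 (ip e1 e1)) \<and>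
     \<comment> \<open>(iii)\<close>
     (\<forall>e1 e2 e3. rho e1 (ip e2 e3) = ip (circ e1 e2) e3 + ip e2 (circ e1 e3))"

definition lie2_bracket :: "('e::real_vector \<Rightarrow> 'e \<Rightarrow> 'e) \<Rightarrow> 'e \<Rightarrow> 'e \<Rightarrow> 'e" where
  "lie2_bracket circ e1 e2 = (1/2) *\<^sub>R (circ e1 e2 - circ e2 e1)"

definition lie2_l3 :: "('e::real_vector \<Rightarrow> 'e \<Rightarrow> 'e) \<Rightarrow> 'e \<Rightarrow> 'e \<Rightarrow> 'e \<Rightarrow> 'e" where
  "lie2_l3 circ e1 e2 e3 =
     lie2_bracket circ e1 (lie2_bracket circ e2 e3) + lie2_bracket circ e2 (lie2_bracket circ e3 e1)
     + lie2_bracket circ e3 (lie2_bracket circ e1 e2)"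

definition linear_on :: "'a::real_vector set \<Rightarrow> ('a \<Rightarrow> 'b::real_vector) \<Rightarrow> bool" where
  "linear_on V f \<longleftrightarrow> (\<forall>x\<in>V. \<forall>y\<in>V. f (x + y) = f x + f y) \<and> (\<forall>r. \<forall>x\<in>V. f (r *\<^sub>R x) = r *\<^sub>R f x)"

text \<open>Isomorphism of 2-term structures (V1 -d-> V0, l2, l3); l2 is given by its three
  components V0\<times>V0\<rightarrow>V0 (b00), V0\<times>V1\<rightarrow>V1 (b01), V1\<times>V0\<rightarrow>V1 (b10).\<close>
definition lie2_isomorphic ::
  "'a0::real_vector set \<Rightarrow> 'a1::real_vector set \<Rightarrow> ('a1 \<Rightarrow> 'a0) \<Rightarrow> ('a0 \<Rightarrow> 'a0 \<Rightarrow> 'a0) \<Rightarrow>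
   ('a0 \<Rightarrow> 'a1 \<Rightarrow> 'a1) \<Rightarrow> ('a1 \<Rightarrow> 'a0 \<Rightarrow> 'a1) \<Rightarrow> ('a0 \<Rightarrow> 'a0 \<Rightarrow> 'a0 \<Rightarrow> 'a1) \<Rightarrow>
   'b0::real_vector set \<Rightarrow> 'b1::real_vector set \<Rightarrow> ('b1 \<Rightarrow> 'b0) \<Rightarrow> ('b0 \<Rightarrow> 'b0 \<Rightarrow> 'b0) \<Rightarrow>
   ('b0 \<Rightarrow> 'b1 \<Rightarrow> 'b1) \<Rightarrow> ('b1 \<Rightarrow> 'b0 \<Rightarrow> 'b1) \<Rightarrow> ('b0 \<Rightarrow> 'b0 \<Rightarrow> 'b0 \<Rightarrow> 'b1) \<Rightarrow> bool" where
  "lie2_isomorphic V0 V1 d b00 b01 b10 l3 V0' V1' d' b00' b01' b10' l3' \<longleftrightarrow>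
   (\<exists>f0 f1 f2.
      bij_betw f0 V0 V0' \<and> bij_betw f1 V1 V1' \<and> linear_on V0 f0 \<and> linear_on V1 f1 \<and>
      (\<forall>m\<in>V1. f0 (d m) = d' (f1 m)) \<and>
      (\<forall>x\<in>V0. \<forall>y\<in>V0. f2 x y \<in> V1') \<and>
      (\<forall>y\<in>V0. linear_on V0 (\<lambda>x. f2 x y)) \<and> (\<forall>x\<in>V0. linear_on V0 (\<lambda>y. f2 x y)) \<and>
      (\<forall>x\<in>V0. \<forall>y\<in>V0. b00' (f0 x) (f0 y) - f0 (b00 x y) = d' (f2 x y)) \<and>
      (\<forall>x\<in>V0. \<forall>m\<in>V1. b01' (f0 x) (f1 m) - f1 (b01 x m) = f2 x (d m)) \<and>
      (\<forall>x\<in>V0. \<forall>m\<in>V1. b10' (f1 m) (f0 x) - f1 (b10 m x) = f2 (d m) x) \<and>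
      (\<forall>x\<in>V0. \<forall>y\<in>V0. \<forall>z\<in>V0.
         f1 (l3 x y z) + b01' (f0 x) (f2 y z) - b01' (f0 y) (f2 x z) - b10' (f2 x y) (f0 z)
         - f2 (b00 x y) z + f2 x (b00 y z) - f2 y (b00 x z) - l3' (f0 x) (f0 y) (f0 z) = 0))"

text \<open>The Lie 2-algebra associated to a pre-Courant structure: V0 = Gamma(E) (all sections),
  V1 = Gamma(Ker rho), d = inclusion.\<close>
definition lie2_of :: "('e::real_vector \<Rightarrow> 'f \<Rightarrow> 'f::zero) \<Rightarrow> ('e \<Rightarrow> 'e \<Rightarrow> 'e) \<Rightarrow>
    'e set \<times> 'e set \<times> ('e \<Rightarrow> 'e) \<times> ('e \<Rightarrow> 'e \<Rightarrow> 'e) \<times> ('e \<Rightarrow> 'e \<Rightarrow> 'e) \<times> ('e \<Rightarrow> 'e \<Rightarrow> 'e) \<times> ('e \<Rightarrow> 'e \<Rightarrow> 'e \<Rightarrow> 'e)" where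
  "lie2_of rho circ = (UNIV, {e. rho e = (\<lambda>f. 0)}, (\<lambda>e. e), lie2_bracket circ, lie2_bracket circ,
     (\<lambda>k e. - lie2_bracket circ e k), lie2_l3 circ)"

end

theory Submission
  imports Defs "HOL-Analysis.Linear_Algebra"
begin

text \<open>Any two pre-Courant structures on the same Courant vector bundle have the same
  diagonal \<open>e \<circ> e\<close>, since it is determined by the pairing through axiom (ii) and
  nondegeneracy, and they have the same image under the anchor by axiom (i). Hence their
  difference \<open>D\<close> is a skew-symmetric bilinear map into \<open>Ker \<rho>\<close>, and the
  skew-symmetrised brackets differ exactly by \<open>D\<close>. The identity maps on \<open>\<Gamma>(E)\<close>
  and \<open>\<Gamma>(Ker \<rho>)\<close> together with \<open>f\<^sub>2 = D\<close> are then an isomorphism of the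
  associated Lie 2-algebras: the only nontrivial condition, the one involving \<open>l\<^sub>3\<close>,
  is the expansion of the Jacobiator of a bracket deformed by a skew-symmetric
  bilinear map.\<close>

lemma bilinear_skew_if_alternating:
  assumes "bilinear D" and "\<And>x. D x x = 0"
  shows "D y x = - D x y"
proof -
  have "D x x + D x y + (D y x + D y y) = 0"
    using assms(2)[of "x + y"] by (simp add: bilinear_ladd bilinear_radd assms(1) add.assoc)
  then show ?thesis
    by (simp add: assms(2) eq_neg_iff_add_eq_0 add.commute)
qed

lemma lie2_bracket_swap: "lie2_bracket c y x = - lie2_bracket c x y"
  by (simp add: lie2_bracket_def algebra_simps)

lemma lie2_bracket_add_skew:
  assumes "\<And>x y. D y x = - D x y"
  shows "lie2_bracket (\<lambda>x y. c x y + D x y) x y = lie2_bracket c x y + D x y"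
proof -
  have "(1/2::real) *\<^sub>R (D x y + D x y) = D x y"
    by (simp flip: scaleR_2)
  then show ?thesis
    by (simp add: lie2_bracket_def assms[of x y] algebra_simps)
qed

lemma bilinear_lie2_bracket:
  assumes "bilinear c"
  shows "bilinear (lie2_bracket c)"
  unfolding bilinear_def lie2_bracket_def
  by (auto intro!: linearI simp: bilinear_ladd[OF assms] bilinear_radd[OF assms]
      bilinear_lmul[OF assms] bilinear_rmul[OF assms] scaleR_add_right scaleR_diff_right)

lemma lie2_l3_add_skew:
  assumes c: "bilinear c" and D: "bilinear D" and skew: "\<And>x y. D y x = - D x y"
  shows "lie2_l3 (\<lambda>x y. c x y + D x y) x y z = lie2_l3 c x y z
     + (lie2_bracket c x (D y z) + D x (lie2_bracket c y z) + D x (D y z))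
     + (lie2_bracket c y (D z x) + D y (lie2_bracket c z x) + D y (D z x))
     + (lie2_bracket c z (D x y) + D z (lie2_bracket c x y) + D z (D x y))"
  unfolding lie2_l3_def lie2_bracket_add_skew[OF skew]
  by (simp add: bilinear_radd[OF bilinear_lie2_bracket[OF c]] bilinear_radd[OF D] algebra_simps)

lemma lie2_of_isomorphic_skew_deformation:
  fixes rho :: "'e::real_vector \<Rightarrow> 'f \<Rightarrow> 'f::zero"
  assumes c: "bilinear c" and D: "bilinear D" and alt: "\<And>x. D x x = 0"
    and ker: "\<And>x y. rho (D x y) = (\<lambda>f. 0)"
  shows "case lie2_of rho c of (V0, V1, d, b00, b01, b10, l3) \<Rightarrow>
         case lie2_of rho (\<lambda>x y. c x y + D x y) of (V0', V1', d', b00', b01', b10', l3') \<Rightarrow>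
           lie2_isomorphic V0 V1 d b00 b01 b10 l3 V0' V1' d' b00' b01' b10' l3'"
proof -
  have skew: "D y x = - D x y" for x y
    using bilinear_skew_if_alternating[OF D alt] .
  note bracket' = lie2_bracket_add_skew[OF skew]
  show ?thesis
    unfolding lie2_of_def lie2_isomorphic_def prod.case
  proof (intro exI[of _ "\<lambda>x. x"] exI[of _ "\<lambda>x. x"] exI[of _ D] conjI ballI)
    show "- lie2_bracket (\<lambda>x y. c x y + D x y) x m - - lie2_bracket c x m = D m x" for x m
      by (simp add: bracket' skew[of x m])
    show "lie2_l3 c x y z + lie2_bracket (\<lambda>x y. c x y + D x y) x (D y z)
       - lie2_bracket (\<lambda>x y. c x y + D x y) y (D x z)
       - - lie2_bracket (\<lambda>x y. c x y + D x y) z (D x y)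
       - D (lie2_bracket c x y) z + D x (lie2_bracket c y z) - D y (lie2_bracket c x z)
       - lie2_l3 (\<lambda>x y. c x y + D x y) x y z = 0" for x y z
      \<comment> \<open>swap the arguments that are out of cyclic order in the definition of an isomorphism\<close>
      unfolding lie2_l3_add_skew[OF c D skew] bracket' skew[of x z]
        skew[of "lie2_bracket c x y" z] lie2_bracket_swap[of c x z]
      by (simp add: bilinear_rneg[OF D] bilinear_rneg[OF bilinear_lie2_bracket[OF c]] algebra_simps)
  qed (auto simp: ker bracket' linear_on_def bij_betw_def bilinear_ladd[OF D] bilinear_radd[OF D]
      bilinear_lmul[OF D] bilinear_rmul[OF D])
qed

lemma courant_pairing_diff:
  assumes "courant_vector_bundle smul ip rho"
  shows "ip (a - b) e = ip a e - ip b e"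
proof -
  have "ip (a - b + b) e = ip (a - b) e + ip b e"
    using assms unfolding courant_vector_bundle_def by blast
  then show ?thesis
    by (simp add: algebra_simps)
qed

lemma courant_anchor_diff:
  assumes "courant_vector_bundle smul ip rho"
  shows "rho (a - b) = (\<lambda>f. rho a f - rho b f)"
proof -
  have "rho (a - b + b) = (\<lambda>f. rho (a - b) f + rho b f)"
    using assms unfolding courant_vector_bundle_def by blast
  then show ?thesis
    by (simp add: fun_eq_iff algebra_simps)
qed

lemma bilinear_if_pre_courant: "pre_courant smul ip rho circ \<Longrightarrow> bilinear circ"
  by (simp add: pre_courant_def bilinear_def linear_iff)

lemma pre_courant_diag_unique:
  assumes cvb: "courant_vector_bundle smul ip rho"
    and "pre_courant smul ip rho circ" and "pre_courant smul ip rho circ'"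
  shows "circ' e e = circ e e"
proof -
  have "ip (circ e e) e' = ip (circ' e e) e'" for e'
    using assms(2,3) unfolding pre_courant_def by metis
  then have "\<forall>e'. ip (circ' e e - circ e e) e' = 0"
    by (simp add: courant_pairing_diff[OF cvb])
  then have "circ' e e - circ e e = 0"
    using cvb unfolding courant_vector_bundle_def by blast
  then show ?thesis
    by simp
qed

lemma pre_courant_diff_in_anchor_kernel:
  assumes cvb: "courant_vector_bundle smul ip rho"
    and "pre_courant smul ip rho circ" and "pre_courant smul ip rho circ'"
  shows "rho (circ' x y - circ x y) = (\<lambda>f. 0)"
proof -
  have "rho (circ' x y) = rho (circ x y)"
    using assms(2,3) unfolding pre_courant_def by metis
  then show ?thesis
    by (simp add: courant_anchor_diff[OF cvb])
qed

theorem corollary4p9: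
  fixes smul :: "'f::{comm_ring_1,real_algebra_1} \<Rightarrow> 'e::real_vector \<Rightarrow> 'e"
    and ip :: "'e \<Rightarrow> 'e \<Rightarrow> 'f" and rho :: "'e \<Rightarrow> 'f \<Rightarrow> 'f"
    and circ circ' :: "'e \<Rightarrow> 'e \<Rightarrow> 'e"
  assumes "courant_vector_bundle smul ip rho"
    and "pre_courant smul ip rho circ"
    and "pre_courant smul ip rho circ'"
  shows "case lie2_of rho circ of (V0, V1, d, b00, b01, b10, l3) \<Rightarrow>
         case lie2_of rho circ' of (V0', V1', d', b00', b01', b10', l3') \<Rightarrow>
           lie2_isomorphic V0 V1 d b00 b01 b10 l3 V0' V1' d' b00' b01' b10' l3'"
proof -
  define D where "D x y = circ' x y - circ x y" for x y
  have circ': "circ' = (\<lambda>x y. circ x y + D x y)"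
    by (simp add: D_def fun_eq_iff)
  have "bilinear D"
    using bilinear_if_pre_courant[OF assms(2)] bilinear_if_pre_courant[OF assms(3)]
    unfolding D_def bilinear_def by (auto intro: linear_compose_sub)
  moreover have "D x x = 0" for x
    using pre_courant_diag_unique[OF assms] by (simp add: D_def)
  moreover have "rho (D x y) = (\<lambda>f. 0)" for x y
    using pre_courant_diff_in_anchor_kernel[OF assms] by (simp add: D_def)
  ultimately show ?thesis
    unfolding circ'
    by (rule lie2_of_isomorphic_skew_deformation[OF bilinear_if_pre_courant[OF assms(2)]])
qed

end
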